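(* Let $\{\psi^t\}$ be any feasible family of sub-problem potentials and let $|V^0| = \max_{t \in \mathcal{T}} |V^t|$. Define the simultaneously updated potentials $$\hat\psi^t_i(l) = \psi^t_i(l) - \frac{1}{|V^0|}\Big(\mu^t_i(l) - \tfrac{1}{|\mathcal{T}(i)|}\sum_{\bar t \in \mathcal{T}(i)} \mu^{\bar t}_i(l)\Big), \qquad \forall i \in V,\ t \in \mathcal{T}(i),\ l \in \mathcal{L},$$ where all max-marginals are computed with the pre-update potentials $\{\psi^t\}$. Then $\{\hat\psi^t\}$ is feasible and $D(\{\hat\psi^t\}) \le D(\{\psi^t\})$.
   Context: Let $G=(V,E)$ be a finite graph and $\mathcal{L}=\{1,\dots,L\}$ a finite label set. Unary scores $\psi_i \in \mathbb{R}^{\mathcal{L}}$ ($i \in V$) and pairwise scores $\phi_{ij} \in \mathbb{R}^{\mathcal{L}\times\mathcal{L}}$ ($ij \in E$) are given. Let $\mathcal{T}$ be a finite collection of trees (sub-problems), each tree $t$ being a subgraph of $G$ with vertex set $V^t$ and edge set $E^t \subseteq E$, such that every vertex of $V$ lies in at least one tree and every edge of $E$ lies in exactly one tree. Write $\mathcal{T}(i) = \{t \in \mathcal{T} : i \in V^t\}$. Each sub-problem $t$ carries unary potentials $\psi^t_i \in \mathbb{R}^{\mathcal{L}}$ for $i \in V^t$; the family $\{\psi^t\}$ is called feasible if $\sum_{t \in \mathcal{T}(i)} \psi^t_i = \psi_i$ for every $i \in V$. For a labeling $x : V^t \to \mathcal{L}$ define the tree energy $E^t(x) = \sum_{i \in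 V^t} \psi^t_i(x_i) + \sum_{ij \in E^t} \phi_{ij}(x_i,x_j)$. The max-energy of sub-problem $t$ is $\mu^t = \max_{x : V^t \to \mathcal{L}} E^t(x)$, and for $i \in V^t$, $l \in \mathcal{L}$ the max-marginal is $\mu^t_i(l) = \max_{x : V^t\to\mathcal{L},\ x_i = l} E^t(x)$. The dual objective is $D(\{\psi^t\}) = \sum_{t\in\mathcal{T}} \mu^t$. *)

theory Defs
  imports Complex_Main "HOL-Library.FuncSet"
begin

text \<open>Edges are ordered pairs (i,j) of vertices; a (simple, undirected) graph stores each
edge in one orientation.  Labels are the elements of a finite type 'l.\<close>

definition is_tree :: "'v set \<Rightarrow> ('v \<times> 'v) set \<Rightarrow> bool" where
  "is_tree Vt Et \<longleftrightarrow> finite Vt \<and> finite Et \<and> Vt \<noteq> {} \<and>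
     (\<forall>(i,j)\<in>Et. i \<in> Vt \<and> j \<in> Vt) \<and>
     (\<forall>i\<in>Vt. \<forall>j\<in>Vt. (\<lambda>a b. (a,b) \<in> Et \<or> (b,a) \<in> Et)\<^sup>*\<^sup>* i j) \<and>
     card Et = card Vt - 1"

definition trees_of :: "'t set \<Rightarrow> ('t \<Rightarrow> 'v set) \<Rightarrow> 'v \<Rightarrow> 't set" where
  "trees_of T Vt i = {t \<in> T. i \<in> Vt t}"

definition feasible ::
  "'v set \<Rightarrow> 't set \<Rightarrow> ('t \<Rightarrow> 'v set) \<Rightarrow> ('v \<Rightarrow> 'l \<Rightarrow> real) \<Rightarrow> ('t \<Rightarrow> 'v \<Rightarrow> 'l \<Rightarrow> real) \<Rightarrow> bool" where
  "feasible V T Vt \<psi> \<psi>t \<longleftrightarrow> (\<forall>i\<in>V. \<forall>l. (\<Sum>t\<in>trees_of T Vt i. \<psi>t t i l) = \<psi> i l)"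

definition tree_energy ::
  "('t \<Rightarrow> 'v set) \<Rightarrow> ('t \<Rightarrow> ('v \<times> 'v) set) \<Rightarrow> ('v \<times> 'v \<Rightarrow> 'l \<Rightarrow> 'l \<Rightarrow> real)
   \<Rightarrow> ('t \<Rightarrow> 'v \<Rightarrow> 'l \<Rightarrow> real) \<Rightarrow> 't \<Rightarrow> ('v \<Rightarrow> 'l) \<Rightarrow> real" where
  "tree_energy Vt Et \<phi> \<psi>t t x =
     (\<Sum>i\<in>Vt t. \<psi>t t i (x i)) + (\<Sum>e\<in>Et t. \<phi> e (x (fst e)) (x (snd e)))"

definition max_energy ::
  "('t \<Rightarrow> 'v set) \<Rightarrow> ('t \<Rightarrow> ('v \<times> 'v) set) \<Rightarrow> ('v \<times> 'v \<Rightarrow> 'l \<Rightarrow> 'l \<Rightarrow> real)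
   \<Rightarrow> ('t \<Rightarrow> 'v \<Rightarrow> 'l \<Rightarrow> real) \<Rightarrow> 't \<Rightarrow> real" where
  "max_energy Vt Et \<phi> \<psi>t t =
     Max (tree_energy Vt Et \<phi> \<psi>t t ` (Vt t \<rightarrow>\<^sub>E (UNIV :: 'l set)))"

definition max_marginal ::
  "('t \<Rightarrow> 'v set) \<Rightarrow> ('t \<Rightarrow> ('v \<times> 'v) set) \<Rightarrow> ('v \<times> 'v \<Rightarrow> 'l \<Rightarrow> 'l \<Rightarrow> real)
   \<Rightarrow> ('t \<Rightarrow> 'v \<Rightarrow> 'l \<Rightarrow> real) \<Rightarrow> 't \<Rightarrow> 'v \<Rightarrow> 'l \<Rightarrow> real" where
  "max_marginal Vt Et \<phi> \<psi>t t i l =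
     Max (tree_energy Vt Et \<phi> \<psi>t t ` {x \<in> Vt t \<rightarrow>\<^sub>E (UNIV :: 'l set). x i = l})"

definition dual_obj ::
  "'t set \<Rightarrow> ('t \<Rightarrow> 'v set) \<Rightarrow> ('t \<Rightarrow> ('v \<times> 'v) set) \<Rightarrow> ('v \<times> 'v \<Rightarrow> 'l \<Rightarrow> 'l \<Rightarrow> real)
   \<Rightarrow> ('t \<Rightarrow> 'v \<Rightarrow> 'l \<Rightarrow> real) \<Rightarrow> real" where
  "dual_obj T Vt Et \<phi> \<psi>t = (\<Sum>t\<in>T. max_energy Vt Et \<phi> \<psi>t t)"

text \<open>Simultaneous update; max-marginals use the pre-update potentials.
  Only the values for i \<in> V, t \<in> T(i) matter.\<close>
definition updated_pot ::
  "'t set \<Rightarrow> ('t \<Rightarrow> 'v set) \<Rightarrow> ('t \<Rightarrow> ('v \<times> 'v) set) \<Rightarrow> ('v \<times> 'v \<Rightarrow> 'l \<Rightarrow> 'l \<Rightarrow> real)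
   \<Rightarrow> ('t \<Rightarrow> 'v \<Rightarrow> 'l \<Rightarrow> real) \<Rightarrow> 't \<Rightarrow> 'v \<Rightarrow> 'l \<Rightarrow> real" where
  "updated_pot T Vt Et \<phi> \<psi>t t i l =
     \<psi>t t i l - (1 / real (Max (card ` Vt ` T))) *
       (max_marginal Vt Et \<phi> \<psi>t t i l
        - (1 / real (card (trees_of T Vt i))) *
          (\<Sum>s\<in>trees_of T Vt i. max_marginal Vt Et \<phi> \<psi>t s i l))"

end

theory Submission
  imports Defs
begin

text \<open>Each tree t moves its unary potentials by c times the deviation of its max-marginals from
  their average over the trees sharing the vertex; the deviations at a vertex sum to zero, so
  feasibility is preserved.  Since every max-marginal of t dominates the energy of a labeling,
  the new energy of x is at most (1 - c |V^t|) \<mu>^t plus c times the averaged max-energies of the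
  trees through the vertices of t, where c = 1/|V^0| \<le> 1/|V^t| keeps the first coefficient
  nonnegative.  Summing over t and exchanging the sums over trees and vertices, the averaged
  terms add up to the sum of |V^t| \<mu>^t over all trees, which cancels the loss exactly.\<close>

lemma finite_labelings: "finite A \<Longrightarrow> finite (A \<rightarrow>\<^sub>E (UNIV :: 'l::finite set))"
  by (rule finite_PiE) auto

lemma tree_energy_le_max_marginal:
  assumes "finite (Vt t)" "x \<in> Vt t \<rightarrow>\<^sub>E (UNIV :: 'l::finite set)"
  shows "tree_energy Vt Et \<phi> \<psi>t t x \<le> max_marginal Vt Et \<phi> \<psi>t t i (x i)"
  unfolding max_marginal_def
  by (rule Max_ge) (use assms in \<open>auto intro: finite_subset[OF _ finite_labelings]\<close>)

lemma tree_energy_le_max_energy: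
  assumes "finite (Vt t)" "x \<in> Vt t \<rightarrow>\<^sub>E (UNIV :: 'l::finite set)"
  shows "tree_energy Vt Et \<phi> \<psi>t t x \<le> max_energy Vt Et \<phi> \<psi>t t"
  unfolding max_energy_def
  by (rule Max_ge) (use assms in \<open>auto intro: finite_labelings\<close>)

lemma max_marginal_le_max_energy:
  assumes "finite (Vt t)" "i \<in> Vt t"
  shows "max_marginal Vt Et \<phi> \<psi>t t i (l :: 'l::finite) \<le> max_energy Vt Et \<phi> \<psi>t t"
proof -
  have "(\<lambda>j. if j \<in> Vt t then l else undefined) \<in> {x \<in> Vt t \<rightarrow>\<^sub>E (UNIV :: 'l set). x i = l}"
    using assms by auto
  then show ?thesis
    unfolding max_marginal_def max_energy_def
    by (intro Max_mono) (use assms in \<open>auto intro: finite_labelings\<close>)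
qed

lemma max_energy_le:
  assumes "finite (Vt t)"
    and "\<And>x. x \<in> Vt t \<rightarrow>\<^sub>E (UNIV :: 'l::finite set) \<Longrightarrow> tree_energy Vt Et \<phi> \<psi>t t x \<le> C"
  shows "max_energy Vt Et \<phi> \<psi>t t \<le> C"
  unfolding max_energy_def
  by (rule Max.boundedI) (use assms in \<open>auto simp: PiE_eq_empty_iff intro: finite_labelings\<close>)

lemma feasible_shift_by_deviation_from_average:
  assumes "feasible V T Vt \<psi> \<psi>t" "finite T" "\<forall>i\<in>V. \<exists>t\<in>T. i \<in> Vt t"
  shows "feasible V T Vt \<psi> (\<lambda>t i l. \<psi>t t i l - c * (m t i l
           - 1 / real (card (trees_of T Vt i)) * (\<Sum>s\<in>trees_of T Vt i. m s i l)))"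
  unfolding feasible_def
proof (intro ballI allI)
  fix i l assume i: "i \<in> V"
  let ?Ti = "trees_of T Vt i"
  have "card ?Ti > 0"
    using assms(2,3) i by (fastforce simp: trees_of_def card_gt_0_iff)
  then have "(\<Sum>t\<in>?Ti. m t i l - 1 / real (card ?Ti) * (\<Sum>s\<in>?Ti. m s i l)) = 0"
    by (simp add: sum_subtractf)
  then show "(\<Sum>t\<in>?Ti. \<psi>t t i l - c * (m t i l - 1 / real (card ?Ti) * (\<Sum>s\<in>?Ti. m s i l)))
      = \<psi> i l"
    using assms(1) i by (simp add: feasible_def sum_subtractf flip: sum_distrib_left)
qed

lemma max_energy_shift_by_max_marginals_le:
  fixes \<psi>t :: "'t \<Rightarrow> 'v \<Rightarrow> 'l::finite \<Rightarrow> real"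
  assumes fin: "finite (Vt t)" and c: "0 \<le> c" "c * real (card (Vt t)) \<le> 1"
    and ab: "\<And>i l. i \<in> Vt t \<Longrightarrow> a i l \<le> b i"
  shows "max_energy Vt Et \<phi> (\<lambda>s i l. \<psi>t s i l - c * (max_marginal Vt Et \<phi> \<psi>t s i l - a i l)) t
    \<le> (1 - c * real (card (Vt t))) * max_energy Vt Et \<phi> \<psi>t t + c * (\<Sum>i\<in>Vt t. b i)"
proof (rule max_energy_le[where Vt = Vt and t = t, OF fin])
  fix x :: "'v \<Rightarrow> 'l" assume x: "x \<in> Vt t \<rightarrow>\<^sub>E UNIV"
  let ?E = "tree_energy Vt Et \<phi> \<psi>t t x"
  have "real (card (Vt t)) * ?E \<le> (\<Sum>i\<in>Vt t. max_marginal Vt Et \<phi> \<psi>t t i (x i))"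
    using sum_bounded_below[of "Vt t" ?E] tree_energy_le_max_marginal[where Vt = Vt and t = t, OF fin x] by simp
  moreover have "(\<Sum>i\<in>Vt t. a i (x i)) \<le> (\<Sum>i\<in>Vt t. b i)"
    by (rule sum_mono) (rule ab)
  moreover have "tree_energy Vt Et \<phi>
        (\<lambda>s i l. \<psi>t s i l - c * (max_marginal Vt Et \<phi> \<psi>t s i l - a i l)) t x
      = ?E - c * (\<Sum>i\<in>Vt t. max_marginal Vt Et \<phi> \<psi>t t i (x i)) + c * (\<Sum>i\<in>Vt t. a i (x i))"
    by (simp add: tree_energy_def sum_subtractf sum_distrib_left right_diff_distrib)
  ultimately have "tree_energy Vt Et \<phi>
        (\<lambda>s i l. \<psi>t s i l - c * (max_marginal Vt Et \<phi> \<psi>t s i l - a i l)) t x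
      \<le> (1 - c * real (card (Vt t))) * ?E + c * (\<Sum>i\<in>Vt t. b i)"
    using c(1) by (simp add: algebra_simps) (smt (verit) mult_left_mono)
  also have "\<dots> \<le> (1 - c * real (card (Vt t))) * max_energy Vt Et \<phi> \<psi>t t + c * (\<Sum>i\<in>Vt t. b i)"
    using c(2) tree_energy_le_max_energy[where Vt = Vt and t = t, OF fin x] by (simp add: mult_left_mono)
  finally show "tree_energy Vt Et \<phi>
        (\<lambda>s i l. \<psi>t s i l - c * (max_marginal Vt Et \<phi> \<psi>t s i l - a i l)) t x
      \<le> (1 - c * real (card (Vt t))) * max_energy Vt Et \<phi> \<psi>t t + c * (\<Sum>i\<in>Vt t. b i)" .
qed

lemma sum_trees_vertices_swap:
  assumes "finite T" "\<forall>t\<in>T. finite (Vt t)"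
  shows "(\<Sum>t\<in>T. \<Sum>i\<in>Vt t. h t i) = (\<Sum>i\<in>\<Union>(Vt ` T). \<Sum>t\<in>trees_of T Vt i. h t i)"
proof -
  have "(\<Sum>t\<in>T. \<Sum>i\<in>Vt t. h t i) = (\<Sum>t\<in>T. \<Sum>i\<in>{i \<in> \<Union>(Vt ` T). i \<in> Vt t}. h t i)"
    by (rule sum.cong) (auto intro: sum.cong)
  also have "\<dots> = (\<Sum>i\<in>\<Union>(Vt ` T). \<Sum>t\<in>{t \<in> T. i \<in> Vt t}. h t i)"
    using assms by (intro sum.swap_restrict) auto
  finally show ?thesis by (simp add: trees_of_def)
qed

lemma sum_trees_vertices_average:
  assumes "finite T" "\<forall>t\<in>T. finite (Vt t)"
  shows "(\<Sum>t\<in>T. \<Sum>i\<in>Vt t. 1 / real (card (trees_of T Vt i)) * (\<Sum>s\<in>trees_of T Vt i. g s))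
       = (\<Sum>t\<in>T. real (card (Vt t)) * g t)"
proof -
  have average: "(\<Sum>t\<in>trees_of T Vt i. 1 / real (card (trees_of T Vt i)) * (\<Sum>s\<in>trees_of T Vt i. g s))
      = (\<Sum>s\<in>trees_of T Vt i. g s)" if "i \<in> \<Union>(Vt ` T)" for i
  proof -
    have "card (trees_of T Vt i) > 0"
      using that assms(1) by (fastforce simp: trees_of_def card_gt_0_iff)
    then show ?thesis by simp
  qed
  have "(\<Sum>t\<in>T. \<Sum>i\<in>Vt t. 1 / real (card (trees_of T Vt i)) * (\<Sum>s\<in>trees_of T Vt i. g s))
      = (\<Sum>i\<in>\<Union>(Vt ` T). \<Sum>s\<in>trees_of T Vt i. g s)"
    by (simp only: sum_trees_vertices_swap[OF assms] average cong: sum.cong)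
  also have "\<dots> = (\<Sum>t\<in>T. \<Sum>i\<in>Vt t. g t)"
    by (simp only: sum_trees_vertices_swap[OF assms])
  finally show ?thesis
    by simp
qed

theorem theorem1:
  fixes V :: "'v set" and E :: "('v \<times> 'v) set"
    and T :: "'t set" and Vt :: "'t \<Rightarrow> 'v set" and Et :: "'t \<Rightarrow> ('v \<times> 'v) set"
    and \<psi> :: "'v \<Rightarrow> 'l::finite \<Rightarrow> real" and \<phi> :: "'v \<times> 'v \<Rightarrow> 'l \<Rightarrow> 'l \<Rightarrow> real"
    and \<psi>t :: "'t \<Rightarrow> 'v \<Rightarrow> 'l \<Rightarrow> real"
  assumes finV: "finite V"
    and graph: "E \<subseteq> V \<times> V" "\<forall>(i,j)\<in>E. i \<noteq> j \<and> (j,i) \<notin> E"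
    and finT: "finite T"
    and sub: "\<forall>t\<in>T. Vt t \<subseteq> V \<and> Et t \<subseteq> E \<and> is_tree (Vt t) (Et t)"
    and cover_V: "\<forall>i\<in>V. \<exists>t\<in>T. i \<in> Vt t"
    and cover_E: "\<forall>e\<in>E. \<exists>!t. t \<in> T \<and> e \<in> Et t"
    and feas: "feasible V T Vt \<psi> \<psi>t"
  shows "feasible V T Vt \<psi> (updated_pot T Vt Et \<phi> \<psi>t)
       \<and> dual_obj T Vt Et \<phi> (updated_pot T Vt Et \<phi> \<psi>t) \<le> dual_obj T Vt Et \<phi> \<psi>t"
proof -
  define c where "c = 1 / real (Max (card ` Vt ` T))"
  define \<mu> where "\<mu> = max_energy Vt Et \<phi> \<psi>t"
  define avg where "avg g i = 1 / real (card (trees_of T Vt i)) * (\<Sum>s\<in>trees_of T Vt i. g s)"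
    for g :: "'t \<Rightarrow> real" and i
  have upd: "updated_pot T Vt Et \<phi> \<psi>t = (\<lambda>t i l. \<psi>t t i l
      - c * (max_marginal Vt Et \<phi> \<psi>t t i l - avg (\<lambda>s. max_marginal Vt Et \<phi> \<psi>t s i l) i))"
    by (simp add: fun_eq_iff updated_pot_def c_def avg_def)
  have finVt: "\<forall>t\<in>T. finite (Vt t)"
    using sub by (auto simp: is_tree_def)
  \<comment> \<open>Also when the maximum is 0: then c = 0 by the convention 1/0 = 0.\<close>
  have step: "0 \<le> c" "c * real (card (Vt t)) \<le> 1" if "t \<in> T" for t
    using that finT by (auto simp: c_def divide_le_eq)
  have avg_le: "avg (\<lambda>s. max_marginal Vt Et \<phi> \<psi>t s i l) i \<le> avg \<mu> i" for i l
    unfolding avg_def \<mu>_def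
    by (intro mult_left_mono sum_mono) (auto simp: trees_of_def finVt max_marginal_le_max_energy)
  have "dual_obj T Vt Et \<phi> (updated_pot T Vt Et \<phi> \<psi>t)
      \<le> (\<Sum>t\<in>T. (1 - c * real (card (Vt t))) * \<mu> t + c * (\<Sum>i\<in>Vt t. avg \<mu> i))"
    unfolding dual_obj_def upd \<mu>_def
    by (intro sum_mono max_energy_shift_by_max_marginals_le)
      (use finVt step avg_le[unfolded \<mu>_def] in auto)
  also have "\<dots> = dual_obj T Vt Et \<phi> \<psi>t"
    using sum_trees_vertices_average[OF finT finVt, of \<mu>]
    by (simp add: dual_obj_def \<mu>_def avg_def algebra_simps sum.distrib sum_subtractf
        flip: sum_distrib_left)
  finally show ?thesis
    using feasible_shift_by_deviation_from_average[OF feas finT cover_V]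
    by (simp add: upd avg_def)
qed

end
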